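(* Let $g:\{\pm1\}^{m_1}\times\{\pm1\}^{m_2}\to\{\pm1\}$ be a gadget with $\hat g(S,T)=0$ whenever $S=\emptyset$ or $T=\emptyset$. Then for all $k,d,n$, $$L_{1,k}(\mathrm{XOR},d,1,1,n)\le\Bigl(\max_{S,T}|\hat g(S,T)|\Bigr)^{-k}L_{1,k}(g,d,m_1,m_2,n)\le 2^{(m_1+m_2)k/2}L_{1,k}(g,d,m_1,m_2,n).$$
   Context: $\hat g(S,T)=\mathbb{E}[g(\mathbf{x},\mathbf{y})\prod_{j\in S}\mathbf{x}_j\prod_{j\in T}\mathbf{y}_j]$ for uniform $\mathbf{x}\in\{\pm1\}^{m_1},\mathbf{y}\in\{\pm1\}^{m_2}$. For a randomized two-party protocol $\mathcal{C}:(\{\pm1\}^{m_1})^n\times(\{\pm1\}^{m_2})^n\to[-1,1]$ (value = expected output over internal randomness; inputs are $n$ blocks $x_i\in\{\pm1\}^{m_1}$, $y_i\in\{\pm1\}^{m_2}$), its $g$-fiber is $\mathcal{C}_{\downarrow g}(z)=\mathbb{E}[\mathcal{C}(\mathbf{x},\mathbf{y})\mid g(\mathbf{x}_i,\mathbf{y}_i)=z_i\ \forall i]$ for uniform $\mathbf{x},\mathbf{y}$. For $f:\{\pm1\}^n\to\mathbb{R}$, $L_{1,k}(f)=\sum_{|I|=k}|\hat f(I)|$. $L_{1,k}(g,d,m_1,m_2,n)$ denotes the supremum of $L_{1,k}(\mathcal{C}_{\downarrow g})$ over all such randomized protocols with at most $d$ bits of communication. $\mathrm{XOR}:\{\pm1\}\times\{\pm1\}\to\{\pm1\}$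 is the gadget $\mathrm{XOR}(a,b)=ab$ (so $m_1=m_2=1$). *)

theory Defs
  imports "HOL-Probability.Probability"
begin

definition cube :: "nat \<Rightarrow> (nat \<Rightarrow> real) set" where
  "cube m = (\<Pi>\<^sub>E j\<in>{..<m}. {-1, 1})"

definition gadget_coeff ::
  "((nat \<Rightarrow> real) \<Rightarrow> (nat \<Rightarrow> real) \<Rightarrow> real) \<Rightarrow> nat \<Rightarrow> nat \<Rightarrow> nat set \<Rightarrow> nat set \<Rightarrow> real" where
  "gadget_coeff g m1 m2 S T =
     (\<Sum>x\<in>cube m1. \<Sum>y\<in>cube m2. g x y * (\<Prod>j\<in>S. x j) * (\<Prod>j\<in>T. y j)) / 2 ^ (m1 + m2)"

definition fcoeff :: "nat \<Rightarrow> ((nat \<Rightarrow> real) \<Rightarrow> real) \<Rightarrow> nat set \<Rightarrow> real" where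
  "fcoeff n f I = (\<Sum>z\<in>cube n. f z * (\<Prod>i\<in>I. z i)) / 2 ^ n"

definition L1k :: "nat \<Rightarrow> nat \<Rightarrow> ((nat \<Rightarrow> real) \<Rightarrow> real) \<Rightarrow> real" where
  "L1k n k f = (\<Sum>I\<in>{I. I \<subseteq> {..<n} \<and> card I = k}. \<bar>fcoeff n f I\<bar>)"

definition blocks :: "nat \<Rightarrow> nat \<Rightarrow> (nat \<Rightarrow> nat \<Rightarrow> real) set" where
  "blocks m n = (\<Pi>\<^sub>E i\<in>{..<n}. cube m)"

datatype ('a, 'b) dproto =
    Leaf real
  | Alice "'a \<Rightarrow> bool" "('a, 'b) dproto" "('a, 'b) dproto"
  | Bob "'b \<Rightarrow> bool" "('a, 'b) dproto" "('a, 'b) dproto"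

fun dproto_eval :: "('a, 'b) dproto \<Rightarrow> 'a \<Rightarrow> 'b \<Rightarrow> real" where
  "dproto_eval (Leaf v) x y = v"
| "dproto_eval (Alice f P Q) x y = (if f x then dproto_eval P x y else dproto_eval Q x y)"
| "dproto_eval (Bob f P Q) x y = (if f y then dproto_eval P x y else dproto_eval Q x y)"

fun dproto_cost :: "('a, 'b) dproto \<Rightarrow> nat" where
  "dproto_cost (Leaf v) = 0"
| "dproto_cost (Alice f P Q) = Suc (max (dproto_cost P) (dproto_cost Q))"
| "dproto_cost (Bob f P Q) = Suc (max (dproto_cost P) (dproto_cost Q))"

fun dproto_outputs_ok :: "('a, 'b) dproto \<Rightarrow> bool" where
  "dproto_outputs_ok (Leaf v) = (v \<in> {-1..1})"
| "dproto_outputs_ok (Alice f P Q) = (dproto_outputs_ok P \<and> dproto_outputs_ok Q)"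
| "dproto_outputs_ok (Bob f P Q) = (dproto_outputs_ok P \<and> dproto_outputs_ok Q)"

type_synonym rproto = "(nat \<Rightarrow> nat \<Rightarrow> real, nat \<Rightarrow> nat \<Rightarrow> real) dproto pmf"

definition rproto_ok :: "nat \<Rightarrow> rproto \<Rightarrow> bool" where
  "rproto_ok d p = (\<forall>P\<in>set_pmf p. dproto_cost P \<le> d \<and> dproto_outputs_ok P)"

definition rproto_val :: "rproto \<Rightarrow> (nat \<Rightarrow> nat \<Rightarrow> real) \<Rightarrow> (nat \<Rightarrow> nat \<Rightarrow> real) \<Rightarrow> real" where
  "rproto_val p x y = measure_pmf.expectation p (\<lambda>P. dproto_eval P x y)"

definition fiber_set ::
  "((nat \<Rightarrow> real) \<Rightarrow> (nat \<Rightarrow> real) \<Rightarrow> real) \<Rightarrow> nat \<Rightarrow> nat \<Rightarrow> nat \<Rightarrow> (nat \<Rightarrow> real)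
    \<Rightarrow> ((nat \<Rightarrow> nat \<Rightarrow> real) \<times> (nat \<Rightarrow> nat \<Rightarrow> real)) set" where
  "fiber_set g m1 m2 n z =
     {(x, y). x \<in> blocks m1 n \<and> y \<in> blocks m2 n \<and> (\<forall>i<n. g (x i) (y i) = z i)}"

definition fiber ::
  "((nat \<Rightarrow> real) \<Rightarrow> (nat \<Rightarrow> real) \<Rightarrow> real) \<Rightarrow> nat \<Rightarrow> nat \<Rightarrow> nat
    \<Rightarrow> ((nat \<Rightarrow> nat \<Rightarrow> real) \<Rightarrow> (nat \<Rightarrow> nat \<Rightarrow> real) \<Rightarrow> real) \<Rightarrow> (nat \<Rightarrow> real) \<Rightarrow> real" where
  "fiber g m1 m2 n C z =
     (\<Sum>(x, y)\<in>fiber_set g m1 m2 n z. C x y) / real (card (fiber_set g m1 m2 n z))"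

definition L1k_comm ::
  "((nat \<Rightarrow> real) \<Rightarrow> (nat \<Rightarrow> real) \<Rightarrow> real) \<Rightarrow> nat \<Rightarrow> nat \<Rightarrow> nat \<Rightarrow> nat \<Rightarrow> nat \<Rightarrow> real" where
  "L1k_comm g k d m1 m2 n =
     (SUP p\<in>{p. rproto_ok d p}. L1k n k (fiber g m1 m2 n (rproto_val p)))"

definition XOR_gadget :: "(nat \<Rightarrow> real) \<Rightarrow> (nat \<Rightarrow> real) \<Rightarrow> real" where
  "XOR_gadget a b = a 0 * b 0"

end

theory Submission
  imports Defs
begin

text \<open>
  Choose (S, T) maximising the absolute value of the gadget coefficient c = g^(S, T). By Parseval
  this maximum is at least 2^(-(m1+m2)/2), and since g^ vanishes when S or T is empty, both S and T
  are nonempty. A protocol for XOR-composed inputs becomes a protocol of the same cost for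
  g-composed inputs if Alice first replaces each block x_i by the bit chi_S(x_i) and Bob each
  y_i by chi_T(y_i). For a balanced gadget all g-fibers have the same size, so the Fourier
  coefficient of a fiber at I is the plain average of C(x, y) * prod_{i in I} g(x_i, y_i).
  Conditioning on the bits chi_S(x_i), chi_T(y_i), each factor g(x_i, y_i) averages to
  chi_S(x_i) chi_T(y_i) c, because the other three terms of the expansion are coefficients with
  an empty index set. Hence every coefficient of the lifted fiber is c^|I| times the
  corresponding coefficient of the XOR fiber, and the bound follows by summing over |I| = k
  and taking suprema over protocols.
\<close>

lemma sum_PiE_PiE_prod:
  fixes h :: "'i \<Rightarrow> 'a \<Rightarrow> 'b \<Rightarrow> 'c :: comm_semiring_1"
  assumes "finite A" "\<And>i. i \<in> A \<Longrightarrow> finite (B i)" "\<And>i. i \<in> A \<Longrightarrow> finite (C i)"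
  shows "(\<Sum>x\<in>PiE A B. \<Sum>y\<in>PiE A C. \<Prod>i\<in>A. h i (x i) (y i)) = (\<Prod>i\<in>A. \<Sum>u\<in>B i. \<Sum>v\<in>C i. h i u v)"
proof -
  have "(\<Prod>i\<in>A. \<Sum>u\<in>B i. \<Sum>v\<in>C i. h i u v) = (\<Sum>x\<in>PiE A B. \<Prod>i\<in>A. \<Sum>v\<in>C i. h i (x i) v)"
    by (rule prod_sum_PiE) (use assms in auto)
  also have "\<dots> = (\<Sum>x\<in>PiE A B. \<Sum>y\<in>PiE A C. \<Prod>i\<in>A. h i (x i) (y i))"
    by (intro sum.cong refl prod_sum_PiE) (use assms in auto)
  finally show ?thesis by simp
qed

lemma sum_swap_nested:
  "(\<Sum>x\<in>X. \<Sum>y\<in>Y. \<Sum>a\<in>A. \<Sum>b\<in>B. F x y a b) = (\<Sum>a\<in>A. \<Sum>b\<in>B. \<Sum>x\<in>X. \<Sum>y\<in>Y. F x y a b)"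
  by (subst sum.swap, subst (2) sum.swap) (simp add: sum.swap[of _ Y])

lemma of_bool_eq_pm1:
  assumes "a \<in> {-1, 1}" "b \<in> {-1, 1}"
  shows "of_bool (a = b) = (1 + a * b) / (2::real)"
  using assms by auto

lemma of_bool_Ball: "finite A \<Longrightarrow> of_bool (\<forall>i\<in>A. P i) = (\<Prod>i\<in>A. of_bool (P i) :: real)"
  by (induction A rule: finite_induct) auto

lemma sum_mult_of_bool_eq_point:
  "finite A \<Longrightarrow> a \<in> A \<Longrightarrow> (\<Sum>x\<in>A. f x * of_bool (x = a)) = (f a :: 'a::comm_semiring_1)"
  by (subst sum.remove) auto

section \<open>Characters of the Boolean cube\<close>

lemma finite_cube [simp]: "finite (cube m)"
  by (simp add: cube_def finite_PiE)

lemma card_cube: "card (cube m) = 2 ^ m"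
  by (simp add: cube_def card_PiE numeral_2_eq_2)

lemma finite_blocks [simp]: "finite (blocks m n)"
  by (simp add: blocks_def finite_PiE)

lemma cube_eq_iff: "u \<in> cube m \<Longrightarrow> u' \<in> cube m \<Longrightarrow> u = u' \<longleftrightarrow> (\<forall>j<m. u j = u' j)"
  by (auto simp: cube_def PiE_iff intro: extensionalityI)

lemma prod_in_pm1: "finite S \<Longrightarrow> (\<And>j. j \<in> S \<Longrightarrow> u j \<in> {-1, 1::real}) \<Longrightarrow> (\<Prod>j\<in>S. u j) \<in> {-1, 1}"
  by (induction S rule: finite_induct) force+

lemma cube_character_in_pm1: "u \<in> cube m \<Longrightarrow> S \<subseteq> {..<m} \<Longrightarrow> (\<Prod>j\<in>S. u j) \<in> {-1, 1::real}"
  by (rule prod_in_pm1) (auto simp: cube_def finite_subset PiE_iff)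

lemma sum_cube_character:
  assumes "S \<subseteq> {..<m}" "S \<noteq> {}"
  shows "(\<Sum>u\<in>cube m. \<Prod>j\<in>S. u j) = (0::real)"
proof -
  have "(\<Sum>u\<in>cube m. \<Prod>j\<in>S. u j) = (\<Sum>u\<in>cube m. \<Prod>j\<in>{..<m}. if j \<in> S then u j else 1)"
    using assms by (intro sum.cong refl) (simp add: prod.If_cases Int_absorb1)
  also have "\<dots> = (\<Prod>j\<in>{..<m}. \<Sum>t\<in>{-1,1::real}. if j \<in> S then t else 1)"
    unfolding cube_def by (rule prod_sum_PiE[symmetric]) auto
  also have "\<dots> = 0"
    using assms by (intro prod_zero) auto
  finally show ?thesis .
qed

lemma sum_cube_character_level:
  assumes "S \<subseteq> {..<m}" "S \<noteq> {}" "\<alpha> \<in> {-1, 1}"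
  shows "(\<Sum>u\<in>cube m. of_bool ((\<Prod>j\<in>S. u j) = \<alpha>)) = (2::real) ^ m / 2"
proof -
  have "(\<Sum>u\<in>cube m. of_bool ((\<Prod>j\<in>S. u j) = \<alpha>)) = (\<Sum>u\<in>cube m. (1 + (\<Prod>j\<in>S. u j) * \<alpha>) / (2::real))"
    using assms by (intro sum.cong refl of_bool_eq_pm1 cube_character_in_pm1) auto
  also have "\<dots> = (real (card (cube m)) + \<alpha> * (\<Sum>u\<in>cube m. \<Prod>j\<in>S. u j)) / 2"
    by (simp add: sum.distrib sum_distrib_left sum_distrib_right mult.commute
        flip: sum_divide_distrib)
  finally show ?thesis
    by (simp only: sum_cube_character[OF assms(1,2)] card_cube) simp
qed

lemma cube_characters_orthogonal:
  assumes u: "u \<in> cube m" and u': "u' \<in> cube m"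
  shows "(\<Sum>S\<in>Pow {..<m}. (\<Prod>j\<in>S. u j) * (\<Prod>j\<in>S. u' j)) = 2 ^ m * of_bool (u = u')"
proof -
  have pm: "u j \<in> {-1, 1}" "u' j \<in> {-1, 1}" if "j < m" for j
    using u u' that by (auto simp: cube_def PiE_iff)
  have "(\<Sum>S\<in>Pow {..<m}. (\<Prod>j\<in>S. u j) * (\<Prod>j\<in>S. u' j))
      = (\<Sum>S\<in>Pow {..<m}. (\<Prod>j\<in>S. u j * u' j) * (\<Prod>j\<in>{..<m} - S. 1))"
    by (simp add: prod.distrib)
  also have "\<dots> = (\<Prod>j\<in>{..<m}. u j * u' j + 1)"
    by (rule prod_add[symmetric]) simp
  also have "\<dots> = (\<Prod>j\<in>{..<m}. 2 * of_bool (u j = u' j))"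
    using pm by (intro prod.cong refl) (simp add: of_bool_eq_pm1)
  also have "\<dots> = 2 ^ m * of_bool (\<forall>j\<in>{..<m}. u j = u' j)"
    by (simp add: prod.distrib of_bool_Ball)
  finally show ?thesis
    using cube_eq_iff[OF u u'] by (simp add: Ball_def)
qed

section \<open>Fourier analysis of gadgets\<close>

lemma gadget_fourier_inversion:
  assumes u: "u \<in> cube m1" and v: "v \<in> cube m2"
  shows "(\<Sum>S\<in>Pow {..<m1}. \<Sum>T\<in>Pow {..<m2}.
            gadget_coeff g m1 m2 S T * (\<Prod>j\<in>S. u j) * (\<Prod>j\<in>T. v j)) = g u v"
proof -
  have "(\<Sum>S\<in>Pow {..<m1}. \<Sum>T\<in>Pow {..<m2}. gadget_coeff g m1 m2 S T * (\<Prod>j\<in>S. u j) * (\<Prod>j\<in>T. v j))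
      = (\<Sum>S\<in>Pow {..<m1}. \<Sum>T\<in>Pow {..<m2}. \<Sum>x\<in>cube m1. \<Sum>y\<in>cube m2.
           g x y * ((\<Prod>j\<in>S. x j) * (\<Prod>j\<in>S. u j)) * ((\<Prod>j\<in>T. y j) * (\<Prod>j\<in>T. v j)) / 2 ^ (m1 + m2))"
    unfolding gadget_coeff_def sum_divide_distrib sum_distrib_right
    by (intro sum.cong refl) (simp add: mult_ac)
  also have "\<dots> = (\<Sum>x\<in>cube m1. \<Sum>y\<in>cube m2. g x y
      * ((\<Sum>S\<in>Pow {..<m1}. (\<Prod>j\<in>S. x j) * (\<Prod>j\<in>S. u j))
         * (\<Sum>T\<in>Pow {..<m2}. (\<Prod>j\<in>T. y j) * (\<Prod>j\<in>T. v j))) / 2 ^ (m1 + m2))"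
    by (subst sum_swap_nested, intro sum.cong refl, unfold sum_product)
       (simp add: mult.assoc sum_distrib_left sum_divide_distrib)
  also have "\<dots> = (\<Sum>x\<in>cube m1. \<Sum>y\<in>cube m2. g x y * of_bool (x = u) * of_bool (y = v))"
    by (intro sum.cong refl) (simp add: cube_characters_orthogonal u v power_add)
  also have "\<dots> = g u v"
    using u v by (simp add: sum_mult_of_bool_eq_point del: sum_mult_of_bool_eq)
  finally show ?thesis .
qed

lemma gadget_parseval:
  assumes pm: "\<forall>x\<in>cube m1. \<forall>y\<in>cube m2. g x y \<in> {-1, 1}"
  shows "(\<Sum>S\<in>Pow {..<m1}. \<Sum>T\<in>Pow {..<m2}. (gadget_coeff g m1 m2 S T)\<^sup>2) = 1"
proof -
  have square: "(gadget_coeff g m1 m2 S T)\<^sup>2 = (\<Sum>x\<in>cube m1. \<Sum>y\<in>cube m2.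
      g x y * (gadget_coeff g m1 m2 S T * (\<Prod>j\<in>S. x j) * (\<Prod>j\<in>T. y j)) / 2 ^ (m1 + m2))" for S T
    unfolding power2_eq_square
    by (subst (2) gadget_coeff_def) (simp add: sum_distrib_left sum_divide_distrib mult_ac)
  have "(\<Sum>S\<in>Pow {..<m1}. \<Sum>T\<in>Pow {..<m2}. (gadget_coeff g m1 m2 S T)\<^sup>2)
      = (\<Sum>x\<in>cube m1. \<Sum>y\<in>cube m2. g x y * g x y / 2 ^ (m1 + m2))"
    unfolding square
    by (subst sum_swap_nested, intro sum.cong refl)
       (simp add: sum_distrib_left[symmetric] sum_divide_distrib[symmetric] gadget_fourier_inversion)
  also have "\<dots> = (\<Sum>x\<in>cube m1. \<Sum>y\<in>cube m2. 1 / 2 ^ (m1 + m2))"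
    using pm by (intro sum.cong refl) fastforce
  also have "\<dots> = 1"
    by (simp add: card_cube power_add)
  finally show ?thesis .
qed

section \<open>Fourier coefficients of fibers\<close>

definition gadget_values :: "('a \<Rightarrow> 'b \<Rightarrow> real) \<Rightarrow> nat \<Rightarrow> (nat \<Rightarrow> 'a) \<Rightarrow> (nat \<Rightarrow> 'b) \<Rightarrow> nat \<Rightarrow> real" where
  "gadget_values g n x y = (\<lambda>i\<in>{..<n}. g (x i) (y i))"

lemma gadget_values_in_cube:
  assumes pm: "\<forall>x\<in>cube m1. \<forall>y\<in>cube m2. g x y \<in> {-1, 1}"
    and "x \<in> blocks m1 n" "y \<in> blocks m2 n"
  shows "gadget_values g n x y \<in> cube n"
  using assms by (auto simp: gadget_values_def cube_def blocks_def PiE_iff)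

lemma fiber_set_eq:
  assumes "z \<in> cube n"
  shows "fiber_set g m1 m2 n z = {p \<in> blocks m1 n \<times> blocks m2 n. gadget_values g n (fst p) (snd p) = z}"
  using assms by (auto simp: fiber_set_def gadget_values_def cube_def PiE_iff extensional_def)

lemma card_fiber_set:
  assumes pm: "\<forall>x\<in>cube m1. \<forall>y\<in>cube m2. g x y \<in> {-1, 1}"
    and balanced: "(\<Sum>u\<in>cube m1. \<Sum>v\<in>cube m2. g u v) = 0"
    and z: "z \<in> cube n"
  shows "real (card (fiber_set g m1 m2 n z)) = (2 ^ (m1 + m2) / 2) ^ n"
proof -
  have level: "(\<Sum>u\<in>cube m1. \<Sum>v\<in>cube m2. of_bool (g u v = z i)) = 2 ^ (m1 + m2) / (2::real)"
    if "i < n" for i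
  proof -
    have "z i \<in> {-1, 1}" using z that by (auto simp: cube_def)
    then have "(\<Sum>u\<in>cube m1. \<Sum>v\<in>cube m2. of_bool (g u v = z i))
        = (\<Sum>u\<in>cube m1. \<Sum>v\<in>cube m2. (1 + z i * g u v) / (2::real))"
      using pm by (intro sum.cong refl) (simp add: of_bool_eq_pm1 mult.commute)
    also have "\<dots> = (card (cube m1) * card (cube m2) + z i * (\<Sum>u\<in>cube m1. \<Sum>v\<in>cube m2. g u v)) / 2"
      by (simp add: sum_divide_distrib[symmetric] sum.distrib sum_distrib_left)
    finally show ?thesis
      by (simp add: balanced card_cube power_add)
  qed
  have "fiber_set g m1 m2 n z
      = (blocks m1 n \<times> blocks m2 n) \<inter> {p. \<forall>i\<in>{..<n}. g (fst p i) (snd p i) = z i}"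
    by (auto simp: fiber_set_def)
  then have "real (card (fiber_set g m1 m2 n z))
      = (\<Sum>p\<in>blocks m1 n \<times> blocks m2 n. of_bool (\<forall>i\<in>{..<n}. g (fst p i) (snd p i) = z i))"
    by simp
  also have "\<dots> = (\<Sum>x\<in>blocks m1 n. \<Sum>y\<in>blocks m2 n. \<Prod>i\<in>{..<n}. of_bool (g (x i) (y i) = z i))"
    by (simp only: sum.cartesian_product split_def of_bool_Ball[OF finite_lessThan])
  also have "\<dots> = (\<Prod>i\<in>{..<n}. \<Sum>u\<in>cube m1. \<Sum>v\<in>cube m2. of_bool (g u v = z i))"
    unfolding blocks_def by (rule sum_PiE_PiE_prod) auto
  also have "\<dots> = (2 ^ (m1 + m2) / 2) ^ n"
    by (simp add: level del: sum_of_bool_eq)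
  finally show ?thesis .
qed

lemma fcoeff_fiber:
  assumes pm: "\<forall>x\<in>cube m1. \<forall>y\<in>cube m2. g x y \<in> {-1, 1}"
    and balanced: "(\<Sum>u\<in>cube m1. \<Sum>v\<in>cube m2. g u v) = 0"
    and I: "I \<subseteq> {..<n}"
  shows "fcoeff n (fiber g m1 m2 n C) I =
    (\<Sum>x\<in>blocks m1 n. \<Sum>y\<in>blocks m2 n. C x y * (\<Prod>i\<in>I. g (x i) (y i))) / 2 ^ ((m1 + m2) * n)"
proof -
  define K :: real where "K = (2 ^ (m1 + m2) / 2) ^ n"
  let ?B = "blocks m1 n \<times> blocks m2 n"
  let ?G = "\<lambda>p. gadget_values g n (fst p) (snd p)"
  let ?F = "\<lambda>p. C (fst p) (snd p) * (\<Prod>i\<in>I. g (fst p i) (snd p i))"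
  have "(\<Sum>z\<in>cube n. fiber g m1 m2 n C z * (\<Prod>i\<in>I. z i))
      = (\<Sum>z\<in>cube n. \<Sum>p\<in>{p \<in> ?B. ?G p = z}. ?F p / K)"
  proof (rule sum.cong [OF refl])
    fix z assume z: "z \<in> cube n"
    have "(\<Prod>i\<in>I. z i) = (\<Prod>i\<in>I. g (fst p i) (snd p i))" if "?G p = z" for p
      using that I by (auto simp: gadget_values_def intro!: prod.cong)
    moreover have "real (card (fiber_set g m1 m2 n z)) = K"
      unfolding K_def by (rule card_fiber_set[OF pm balanced z])
    ultimately show "fiber g m1 m2 n C z * (\<Prod>i\<in>I. z i) = (\<Sum>p\<in>{p \<in> ?B. ?G p = z}. ?F p / K)"
      unfolding fiber_def split_def
      by (simp add: fiber_set_eq[OF z] sum_divide_distrib sum_distrib_right) (auto intro!: sum.cong)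
  qed
  also have "\<dots> = (\<Sum>p\<in>?B. ?F p / K)"
    \<comment> \<open>the fibers over the points of the cube partition all inputs\<close>
    by (rule sum.group) (auto intro: gadget_values_in_cube[OF pm])
  also have "\<dots> = (\<Sum>x\<in>blocks m1 n. \<Sum>y\<in>blocks m2 n. C x y * (\<Prod>i\<in>I. g (x i) (y i))) / K"
    by (simp only: sum.cartesian_product split_def sum_divide_distrib)
  moreover have "2 ^ n * K = 2 ^ ((m1 + m2) * n)"
    unfolding K_def by (simp add: power_mult flip: power_mult_distrib)
  ultimately show ?thesis
    unfolding fcoeff_def by (simp add: divide_divide_eq_left mult.commute)
qed

section \<open>Composing with characters\<close>

definition block_character :: "nat set \<Rightarrow> nat \<Rightarrow> (nat \<Rightarrow> nat \<Rightarrow> real) \<Rightarrow> nat \<Rightarrow> nat \<Rightarrow> real" where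
  "block_character S n x = (\<lambda>i\<in>{..<n}. \<lambda>j\<in>{..<1}. \<Prod>j'\<in>S. x i j')"

lemma block_character_in_blocks:
  assumes x: "x \<in> blocks m n" and S: "S \<subseteq> {..<m}"
  shows "block_character S n x \<in> blocks 1 n"
proof -
  have "(\<Prod>j\<in>S. x i j) \<in> {-1, 1}" if "i < n" for i
    using x that by (intro cube_character_in_pm1[OF _ S]) (auto simp: blocks_def)
  then show ?thesis
    by (auto simp: block_character_def blocks_def cube_def PiE_iff)
qed

lemma block_character_eq_iff:
  assumes "a \<in> blocks 1 n"
  shows "a = block_character S n x \<longleftrightarrow> (\<forall>i<n. (\<Prod>j\<in>S. x i j) = a i 0)"
  using assms
  by (auto simp: block_character_def blocks_def cube_def PiE_iff extensional_def fun_eq_iff)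

lemma sum_gadget_character_levels:
  assumes S: "S \<subseteq> {..<m1}" and T: "T \<subseteq> {..<m2}" and \<alpha>: "\<alpha> \<in> {-1, 1}" and \<beta>: "\<beta> \<in> {-1, 1}"
  shows "(\<Sum>u\<in>cube m1. \<Sum>v\<in>cube m2. of_bool ((\<Prod>j\<in>S. u j) = \<alpha>) * of_bool ((\<Prod>j\<in>T. v j) = \<beta>) * g u v)
    = 2 ^ (m1 + m2) / 4 * (gadget_coeff g m1 m2 {} {} + \<alpha> * gadget_coeff g m1 m2 S {}
        + \<beta> * gadget_coeff g m1 m2 {} T + \<alpha> * \<beta> * gadget_coeff g m1 m2 S T)"
proof -
  let ?A = "\<lambda>S T. \<Sum>u\<in>cube m1. \<Sum>v\<in>cube m2. g u v * (\<Prod>j\<in>S. u j) * (\<Prod>j\<in>T. v j)"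
  have "(\<Sum>u\<in>cube m1. \<Sum>v\<in>cube m2. of_bool ((\<Prod>j\<in>S. u j) = \<alpha>) * of_bool ((\<Prod>j\<in>T. v j) = \<beta>) * g u v)
      = (\<Sum>u\<in>cube m1. \<Sum>v\<in>cube m2. (g u v + \<alpha> * (g u v * (\<Prod>j\<in>S. u j)) + \<beta> * (g u v * (\<Prod>j\<in>T. v j))
         + \<alpha> * \<beta> * (g u v * (\<Prod>j\<in>S. u j) * (\<Prod>j\<in>T. v j))) / 4)"
  proof (intro sum.cong refl)
    fix u v assume "u \<in> cube m1" "v \<in> cube m2"
    then have levels: "of_bool ((\<Prod>j\<in>S. u j) = \<alpha>) = (1 + (\<Prod>j\<in>S. u j) * \<alpha>) / (2::real)"
      "of_bool ((\<Prod>j\<in>T. v j) = \<beta>) = (1 + (\<Prod>j\<in>T. v j) * \<beta>) / (2::real)"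
      using S T \<alpha> \<beta> by (simp_all only: of_bool_eq_pm1 cube_character_in_pm1)
    show "of_bool ((\<Prod>j\<in>S. u j) = \<alpha>) * of_bool ((\<Prod>j\<in>T. v j) = \<beta>) * g u v
      = (g u v + \<alpha> * (g u v * (\<Prod>j\<in>S. u j)) + \<beta> * (g u v * (\<Prod>j\<in>T. v j))
         + \<alpha> * \<beta> * (g u v * (\<Prod>j\<in>S. u j) * (\<Prod>j\<in>T. v j))) / 4"
      unfolding levels by (simp add: field_simps)
  qed
  also have "\<dots> = (?A {} {} + \<alpha> * ?A S {} + \<beta> * ?A {} T + \<alpha> * \<beta> * ?A S T) / 4"
    by (simp add: sum.distrib sum_distrib_left flip: sum_divide_distrib)
  also have "\<dots> = 2 ^ (m1 + m2) / 4 * (gadget_coeff g m1 m2 {} {} + \<alpha> * gadget_coeff g m1 m2 S {}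
        + \<beta> * gadget_coeff g m1 m2 {} T + \<alpha> * \<beta> * gadget_coeff g m1 m2 S T)"
    by (simp add: gadget_coeff_def field_simps)
  finally show ?thesis .
qed

lemma sum_character_levels:
  assumes S: "S \<subseteq> {..<m1}" "S \<noteq> {}" and T: "T \<subseteq> {..<m2}" "T \<noteq> {}"
    and \<alpha>: "\<alpha> \<in> {-1, 1}" and \<beta>: "\<beta> \<in> {-1, 1}"
  shows "(\<Sum>u\<in>cube m1. \<Sum>v\<in>cube m2. of_bool ((\<Prod>j\<in>S. u j) = \<alpha>) * of_bool ((\<Prod>j\<in>T. v j) = \<beta>))
    = (2 ^ (m1 + m2) / 4 :: real)"
  by (simp only: sum_product[symmetric] sum_cube_character_level[OF S \<alpha>] sum_cube_character_level[OF T \<beta>])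
     (simp add: power_add)

lemma sum_blocks_character_levels:
  assumes no_empty: "\<And>S T. S \<subseteq> {..<m1} \<Longrightarrow> T \<subseteq> {..<m2} \<Longrightarrow> S = {} \<or> T = {}
                     \<Longrightarrow> gadget_coeff g m1 m2 S T = 0"
    and S: "S \<subseteq> {..<m1}" "S \<noteq> {}" and T: "T \<subseteq> {..<m2}" "T \<noteq> {}"
    and a: "a \<in> blocks 1 n" and b: "b \<in> blocks 1 n" and I: "I \<subseteq> {..<n}"
  shows "(\<Sum>x\<in>blocks m1 n. \<Sum>y\<in>blocks m2 n.
            of_bool (a = block_character S n x) * of_bool (b = block_character T n y)
            * (\<Prod>i\<in>I. g (x i) (y i)))
       = (2 ^ (m1 + m2) / 4) ^ n * gadget_coeff g m1 m2 S T ^ card I * (\<Prod>i\<in>I. a i 0 * b i 0)"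
proof -
  let ?c = "2 ^ (m1 + m2) / (4::real)"
  let ?h = "\<lambda>i u v. of_bool ((\<Prod>j\<in>S. u j) = a i 0) * of_bool ((\<Prod>j\<in>T. v j) = b i 0)
                     * (if i \<in> I then g u v else 1)"
  have restrict_I: "(\<Prod>i\<in>I. f i) = (\<Prod>i\<in>{..<n}. if i \<in> I then f i else 1)" for f :: "nat \<Rightarrow> real"
    using I by (simp add: prod.If_cases Int_absorb1)
  have "(\<Sum>x\<in>blocks m1 n. \<Sum>y\<in>blocks m2 n.
            of_bool (a = block_character S n x) * of_bool (b = block_character T n y)
            * (\<Prod>i\<in>I. g (x i) (y i)))
      = (\<Sum>x\<in>blocks m1 n. \<Sum>y\<in>blocks m2 n. \<Prod>i\<in>{..<n}. ?h i (x i) (y i))"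
    unfolding block_character_eq_iff[OF a] block_character_eq_iff[OF b]
    by (simp add: of_bool_Ball[OF finite_lessThan, unfolded Ball_def lessThan_iff] restrict_I
        prod.distrib)
  also have "\<dots> = (\<Prod>i\<in>{..<n}. \<Sum>u\<in>cube m1. \<Sum>v\<in>cube m2. ?h i u v)"
    unfolding blocks_def by (rule sum_PiE_PiE_prod) auto
  also have "\<dots> = (\<Prod>i\<in>{..<n}. ?c * (if i \<in> I then a i 0 * b i 0 * gadget_coeff g m1 m2 S T else 1))"
  proof (rule prod.cong [OF refl])
    fix i assume "i \<in> {..<n}"
    then have ab: "a i 0 \<in> {-1, 1}" "b i 0 \<in> {-1, 1}"
      using a b by (auto simp: blocks_def cube_def)
    show "(\<Sum>u\<in>cube m1. \<Sum>v\<in>cube m2. ?h i u v)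
        = ?c * (if i \<in> I then a i 0 * b i 0 * gadget_coeff g m1 m2 S T else 1)"
      using sum_gadget_character_levels[OF S(1) T(1) ab, of g] sum_character_levels[OF S T ab]
        no_empty[of "{}" "{}"] no_empty[OF S(1), of "{}"] no_empty[of "{}" T] S T
      by (cases "i \<in> I") simp_all
  qed
  also have "\<dots> = ?c ^ n * (\<Prod>i\<in>I. a i 0 * b i 0 * gadget_coeff g m1 m2 S T)"
    unfolding restrict_I[of "\<lambda>i. a i 0 * b i 0 * gadget_coeff g m1 m2 S T"]
    by (simp only: prod.distrib prod_constant card_lessThan)
  also have "\<dots> = ?c ^ n * gadget_coeff g m1 m2 S T ^ card I * (\<Prod>i\<in>I. a i 0 * b i 0)"
    by (simp only: prod.distrib prod_constant mult_ac)
  finally show ?thesis .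
qed

lemma sum_blocks_compose_characters:
  assumes no_empty: "\<And>S T. S \<subseteq> {..<m1} \<Longrightarrow> T \<subseteq> {..<m2} \<Longrightarrow> S = {} \<or> T = {}
                     \<Longrightarrow> gadget_coeff g m1 m2 S T = 0"
    and S: "S \<subseteq> {..<m1}" "S \<noteq> {}" and T: "T \<subseteq> {..<m2}" "T \<noteq> {}" and I: "I \<subseteq> {..<n}"
  shows "(\<Sum>x\<in>blocks m1 n. \<Sum>y\<in>blocks m2 n.
            C (block_character S n x) (block_character T n y) * (\<Prod>i\<in>I. g (x i) (y i)))
     = (2 ^ (m1 + m2) / 4) ^ n * gadget_coeff g m1 m2 S T ^ card I *
       (\<Sum>a\<in>blocks 1 n. \<Sum>b\<in>blocks 1 n. C a b * (\<Prod>i\<in>I. a i 0 * b i 0))"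
proof -
  let ?c = "(2 ^ (m1 + m2) / 4) ^ n * gadget_coeff g m1 m2 S T ^ card I"
  let ?G = "\<lambda>x y. \<Prod>i\<in>I. g (x i) (y i)"
  let ?L = "\<lambda>a b x y. of_bool (a = block_character S n x) * of_bool (b = block_character T n y)"
  have "(\<Sum>x\<in>blocks m1 n. \<Sum>y\<in>blocks m2 n. C (block_character S n x) (block_character T n y) * ?G x y)
      = (\<Sum>x\<in>blocks m1 n. \<Sum>y\<in>blocks m2 n. \<Sum>a\<in>blocks 1 n. \<Sum>b\<in>blocks 1 n.
           C a b * ?G x y * of_bool (a = block_character S n x) * of_bool (b = block_character T n y))"
    using block_character_in_blocks S T
    by (intro sum.cong refl) (simp add: sum_mult_of_bool_eq_point del: sum_mult_of_bool_eq)
  also have "\<dots> = (\<Sum>a\<in>blocks 1 n. \<Sum>b\<in>blocks 1 n. C a b *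
           (\<Sum>x\<in>blocks m1 n. \<Sum>y\<in>blocks m2 n. ?L a b x y * ?G x y))"
    by (subst sum_swap_nested)
       (simp add: sum_distrib_left mult_ac del: sum_mult_of_bool_eq sum_of_bool_mult_eq)
  also have "\<dots> = (\<Sum>a\<in>blocks 1 n. \<Sum>b\<in>blocks 1 n. C a b * (?c * (\<Prod>i\<in>I. a i 0 * b i 0)))"
    using sum_blocks_character_levels[OF no_empty S T _ _ I]
    by (intro sum.cong refl) (simp add: mult.assoc)
  also have "\<dots> = ?c * (\<Sum>a\<in>blocks 1 n. \<Sum>b\<in>blocks 1 n. C a b * (\<Prod>i\<in>I. a i 0 * b i 0))"
    by (simp only: sum_distrib_left mult.left_commute)
  finally show ?thesis .
qed

lemma XOR_gadget_pm1: "\<forall>x\<in>cube 1. \<forall>y\<in>cube 1. XOR_gadget x y \<in> {-1, 1}"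
proof (intro ballI)
  fix x y :: "nat \<Rightarrow> real" assume "x \<in> cube 1" "y \<in> cube 1"
  then have "x 0 \<in> {-1, 1}" "y 0 \<in> {-1, 1}"
    by (auto simp: cube_def)
  then show "XOR_gadget x y \<in> {-1, 1}"
    by (auto simp: XOR_gadget_def)
qed

lemma XOR_gadget_balanced: "(\<Sum>u\<in>cube 1. \<Sum>v\<in>cube 1. XOR_gadget u v) = 0"
  using sum_cube_character[of "{0}" 1] by (simp add: XOR_gadget_def flip: sum_product)

lemma fcoeff_fiber_compose_characters:
  assumes pm: "\<forall>x\<in>cube m1. \<forall>y\<in>cube m2. g x y \<in> {-1, 1}"
    and no_empty: "\<And>S T. S \<subseteq> {..<m1} \<Longrightarrow> T \<subseteq> {..<m2} \<Longrightarrow> S = {} \<or> T = {}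
                     \<Longrightarrow> gadget_coeff g m1 m2 S T = 0"
    and S: "S \<subseteq> {..<m1}" "S \<noteq> {}" and T: "T \<subseteq> {..<m2}" "T \<noteq> {}" and I: "I \<subseteq> {..<n}"
  shows "fcoeff n (fiber g m1 m2 n (\<lambda>x y. C (block_character S n x) (block_character T n y))) I
       = gadget_coeff g m1 m2 S T ^ card I * fcoeff n (fiber XOR_gadget 1 1 n C) I"
proof -
  let ?X = "\<Sum>a\<in>blocks 1 n. \<Sum>b\<in>blocks 1 n. C a b * (\<Prod>i\<in>I. a i 0 * b i 0)"
  have balanced: "(\<Sum>u\<in>cube m1. \<Sum>v\<in>cube m2. g u v) = 0"
    using no_empty[of "{}" "{}"] by (simp add: gadget_coeff_def)
  have "(4::real) ^ n = 2 ^ (n + n)"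
    by (simp add: power_add flip: power_mult_distrib)
  then have scale: "(2 ^ (m1 + m2) / 4) ^ n / 2 ^ ((m1 + m2) * n) = (1 / 2 ^ ((1 + 1) * n) :: real)"
    by (simp add: power_divide power_mult_distrib power_mult)
  have "fcoeff n (fiber g m1 m2 n (\<lambda>x y. C (block_character S n x) (block_character T n y))) I
      = (\<Sum>x\<in>blocks m1 n. \<Sum>y\<in>blocks m2 n.
           C (block_character S n x) (block_character T n y) * (\<Prod>i\<in>I. g (x i) (y i))) / 2 ^ ((m1 + m2) * n)"
    by (rule fcoeff_fiber[OF pm balanced I])
  also have "\<dots> = gadget_coeff g m1 m2 S T ^ card I * ?X * ((2 ^ (m1 + m2) / 4) ^ n / 2 ^ ((m1 + m2) * n))"
    by (simp add: sum_blocks_compose_characters[OF no_empty S T I])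
  also have "\<dots> = gadget_coeff g m1 m2 S T ^ card I * fcoeff n (fiber XOR_gadget 1 1 n C) I"
    by (simp only: scale fcoeff_fiber[OF XOR_gadget_pm1 XOR_gadget_balanced I] XOR_gadget_def) simp
  finally show ?thesis .
qed

lemma L1k_fiber_compose_characters:
  assumes pm: "\<forall>x\<in>cube m1. \<forall>y\<in>cube m2. g x y \<in> {-1, 1}"
    and no_empty: "\<And>S T. S \<subseteq> {..<m1} \<Longrightarrow> T \<subseteq> {..<m2} \<Longrightarrow> S = {} \<or> T = {}
                     \<Longrightarrow> gadget_coeff g m1 m2 S T = 0"
    and S: "S \<subseteq> {..<m1}" "S \<noteq> {}" and T: "T \<subseteq> {..<m2}" "T \<noteq> {}"
  shows "L1k n k (fiber g m1 m2 n (\<lambda>x y. C (block_character S n x) (block_character T n y)))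
       = \<bar>gadget_coeff g m1 m2 S T\<bar> ^ k * L1k n k (fiber XOR_gadget 1 1 n C)"
  unfolding L1k_def sum_distrib_left
  by (intro sum.cong refl)
     (auto simp: fcoeff_fiber_compose_characters[OF pm no_empty S T] abs_mult power_abs)

section \<open>Protocols\<close>

fun dproto_map :: "('a \<Rightarrow> 'c) \<Rightarrow> ('b \<Rightarrow> 'd) \<Rightarrow> ('c, 'd) dproto \<Rightarrow> ('a, 'b) dproto" where
  "dproto_map f h (Leaf v) = Leaf v"
| "dproto_map f h (Alice q P Q) = Alice (q \<circ> f) (dproto_map f h P) (dproto_map f h Q)"
| "dproto_map f h (Bob q P Q) = Bob (q \<circ> h) (dproto_map f h P) (dproto_map f h Q)"

lemma dproto_eval_map [simp]: "dproto_eval (dproto_map f h P) x y = dproto_eval P (f x) (h y)"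
  by (induction P) auto

lemma dproto_cost_map [simp]: "dproto_cost (dproto_map f h P) = dproto_cost P"
  by (induction P) auto

lemma dproto_outputs_ok_map [simp]: "dproto_outputs_ok (dproto_map f h P) = dproto_outputs_ok P"
  by (induction P) auto

lemma rproto_val_map_pmf:
  "rproto_val (map_pmf (dproto_map f h) p) = (\<lambda>x y. rproto_val p (f x) (h y))"
  by (simp add: rproto_val_def fun_eq_iff)

lemma rproto_ok_map_pmf: "rproto_ok d p \<Longrightarrow> rproto_ok d (map_pmf (dproto_map f h) p)"
  by (auto simp: rproto_ok_def)

lemma rproto_ok_Leaf: "rproto_ok d (return_pmf (Leaf 0))"
  by (simp add: rproto_ok_def)

lemma dproto_eval_abs_le: "dproto_outputs_ok P \<Longrightarrow> \<bar>dproto_eval P x y\<bar> \<le> 1"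
  by (induction P) auto

lemma rproto_val_abs_le:
  assumes "rproto_ok d p"
  shows "\<bar>rproto_val p x y\<bar> \<le> 1"
proof -
  have bound: "AE P in measure_pmf p. \<bar>dproto_eval P x y\<bar> \<le> 1"
    using assms by (auto simp: rproto_ok_def AE_measure_pmf_iff intro: dproto_eval_abs_le)
  then have int: "integrable (measure_pmf p) (\<lambda>P. dproto_eval P x y)"
    by (intro measure_pmf.integrable_const_bound[where B=1]) auto
  have "-1 \<le> rproto_val p x y" "rproto_val p x y \<le> 1"
    unfolding rproto_val_def using bound
    by (auto intro!: measure_pmf.integral_ge_const measure_pmf.integral_le_const int elim: AE_mp)
  then show ?thesis by simp
qed

lemma fiber_abs_le:
  assumes "\<And>x y. \<bar>C x y\<bar> \<le> 1"
  shows "\<bar>fiber g m1 m2 n C z\<bar> \<le> 1"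
proof -
  let ?F = "fiber_set g m1 m2 n z"
  have "\<bar>\<Sum>(x, y)\<in>?F. C x y\<bar> \<le> (\<Sum>(x, y)\<in>?F. 1)"
    by (rule order_trans[OF sum_abs sum_mono]) (use assms in auto)
  then show ?thesis
    by (cases "card ?F = 0") (auto simp: fiber_def abs_divide divide_le_eq_1)
qed

lemma fcoeff_abs_le:
  assumes "\<And>z. \<bar>f z\<bar> \<le> 1" and I: "I \<subseteq> {..<n}"
  shows "\<bar>fcoeff n f I\<bar> \<le> 1"
proof -
  have "\<bar>\<Sum>z\<in>cube n. f z * (\<Prod>i\<in>I. z i)\<bar> \<le> (\<Sum>z\<in>cube n. 1)"
  proof (rule order_trans[OF sum_abs sum_mono])
    fix z assume "z \<in> cube n"
    then have "\<bar>\<Prod>i\<in>I. z i\<bar> = 1"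
      using cube_character_in_pm1[OF _ I, of z] by auto
    then show "\<bar>f z * (\<Prod>i\<in>I. z i)\<bar> \<le> 1"
      using assms(1)[of z] by (simp add: abs_mult)
  qed
  then show ?thesis
    by (simp add: fcoeff_def card_cube abs_divide)
qed

lemma L1k_le_card:
  assumes "\<And>z. \<bar>f z\<bar> \<le> 1"
  shows "L1k n k f \<le> card {I. I \<subseteq> {..<n} \<and> card I = k}"
proof -
  have "L1k n k f \<le> (\<Sum>I\<in>{I. I \<subseteq> {..<n} \<and> card I = k}. 1)"
    unfolding L1k_def by (intro sum_mono fcoeff_abs_le[OF assms]) auto
  then show ?thesis by simp
qed

lemma bdd_above_L1k_fiber:
  "bdd_above ((\<lambda>p. L1k n k (fiber g m1 m2 n (rproto_val p))) ` {p. rproto_ok d p})"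
  by (rule bdd_aboveI2[where M = "real (card {I. I \<subseteq> {..<n} \<and> card I = k})"])
     (simp add: L1k_le_card fiber_abs_le rproto_val_abs_le)

lemma L1k_comm_nonneg: "0 \<le> L1k_comm g k d m1 m2 n"
  unfolding L1k_comm_def
  by (rule cSUP_upper2[OF bdd_above_L1k_fiber, of "return_pmf (Leaf 0)"])
     (auto simp: rproto_ok_Leaf L1k_def)

lemma L1k_comm_XOR_le:
  assumes pm: "\<forall>x\<in>cube m1. \<forall>y\<in>cube m2. g x y \<in> {-1, 1}"
    and no_empty: "\<And>S T. S \<subseteq> {..<m1} \<Longrightarrow> T \<subseteq> {..<m2} \<Longrightarrow> S = {} \<or> T = {}
                     \<Longrightarrow> gadget_coeff g m1 m2 S T = 0"
    and S: "S \<subseteq> {..<m1}" "S \<noteq> {}" and T: "T \<subseteq> {..<m2}" "T \<noteq> {}"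
    and nonzero: "gadget_coeff g m1 m2 S T \<noteq> 0"
  shows "L1k_comm XOR_gadget k d 1 1 n
           \<le> inverse \<bar>gadget_coeff g m1 m2 S T\<bar> ^ k * L1k_comm g k d m1 m2 n"
  unfolding L1k_comm_def[of XOR_gadget]
proof (rule cSUP_least)
  show "{p. rproto_ok d p} \<noteq> {}"
    using rproto_ok_Leaf by blast
next
  fix p assume p: "p \<in> {p. rproto_ok d p}"
  let ?lift = "map_pmf (dproto_map (block_character S n) (block_character T n))"
  have "L1k n k (fiber XOR_gadget 1 1 n (rproto_val p))
      = inverse \<bar>gadget_coeff g m1 m2 S T\<bar> ^ k * L1k n k (fiber g m1 m2 n (rproto_val (?lift p)))"
    using nonzero
    by (simp add: rproto_val_map_pmf L1k_fiber_compose_characters[OF pm no_empty S T] power_inverse)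
  also have "\<dots> \<le> inverse \<bar>gadget_coeff g m1 m2 S T\<bar> ^ k * L1k_comm g k d m1 m2 n"
    unfolding L1k_comm_def
    by (intro mult_left_mono cSUP_upper bdd_above_L1k_fiber) (use p rproto_ok_map_pmf in auto)
  finally show "L1k n k (fiber XOR_gadget 1 1 n (rproto_val p))
      \<le> inverse \<bar>gadget_coeff g m1 m2 S T\<bar> ^ k * L1k_comm g k d m1 m2 n" .
qed

section \<open>The largest gadget coefficient\<close>

definition max_abs_gadget_coeff ::
  "((nat \<Rightarrow> real) \<Rightarrow> (nat \<Rightarrow> real) \<Rightarrow> real) \<Rightarrow> nat \<Rightarrow> nat \<Rightarrow> real" where
  "max_abs_gadget_coeff g m1 m2 =
     Max {\<bar>gadget_coeff g m1 m2 S T\<bar> | S T. S \<subseteq> {..<m1} \<and> T \<subseteq> {..<m2}}"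

lemma abs_gadget_coeffs_eq_image:
  "{\<bar>gadget_coeff g m1 m2 S T\<bar> | S T. S \<subseteq> {..<m1} \<and> T \<subseteq> {..<m2}}
     = (\<lambda>(S, T). \<bar>gadget_coeff g m1 m2 S T\<bar>) ` (Pow {..<m1} \<times> Pow {..<m2})"
  by auto

lemma abs_gadget_coeff_le_max:
  "S \<subseteq> {..<m1} \<Longrightarrow> T \<subseteq> {..<m2} \<Longrightarrow> \<bar>gadget_coeff g m1 m2 S T\<bar> \<le> max_abs_gadget_coeff g m1 m2"
  unfolding max_abs_gadget_coeff_def abs_gadget_coeffs_eq_image by (rule Max_ge) auto

lemma max_abs_gadget_coeff_attained:
  obtains S T where "S \<subseteq> {..<m1}" "T \<subseteq> {..<m2}"
    "max_abs_gadget_coeff g m1 m2 = \<bar>gadget_coeff g m1 m2 S T\<bar>"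
proof -
  have "max_abs_gadget_coeff g m1 m2
          \<in> (\<lambda>(S, T). \<bar>gadget_coeff g m1 m2 S T\<bar>) ` (Pow {..<m1} \<times> Pow {..<m2})"
    unfolding max_abs_gadget_coeff_def abs_gadget_coeffs_eq_image by (rule Max_in) auto
  then show ?thesis
    using that by auto
qed

lemma max_abs_gadget_coeff_lower_bound:
  assumes pm: "\<forall>x\<in>cube m1. \<forall>y\<in>cube m2. g x y \<in> {-1, 1}"
  shows "1 \<le> 2 ^ (m1 + m2) * (max_abs_gadget_coeff g m1 m2)\<^sup>2"
proof -
  have "1 = (\<Sum>S\<in>Pow {..<m1}. \<Sum>T\<in>Pow {..<m2}. (gadget_coeff g m1 m2 S T)\<^sup>2)"
    using gadget_parseval[OF pm] by simp
  also have "\<dots> \<le> (\<Sum>S\<in>Pow {..<m1}. \<Sum>T\<in>Pow {..<m2}. (max_abs_gadget_coeff g m1 m2)\<^sup>2)"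
  proof (intro sum_mono)
    fix S T assume "S \<in> Pow {..<m1}" "T \<in> Pow {..<m2}"
    then have "\<bar>gadget_coeff g m1 m2 S T\<bar> \<le> max_abs_gadget_coeff g m1 m2"
      by (simp add: abs_gadget_coeff_le_max)
    from power_mono[OF this abs_ge_zero, of 2]
    show "(gadget_coeff g m1 m2 S T)\<^sup>2 \<le> (max_abs_gadget_coeff g m1 m2)\<^sup>2"
      by simp
  qed
  also have "\<dots> = 2 ^ (m1 + m2) * (max_abs_gadget_coeff g m1 m2)\<^sup>2"
    by (simp add: card_Pow power_add)
  finally show ?thesis .
qed

lemma max_abs_gadget_coeff_pos:
  assumes pm: "\<forall>x\<in>cube m1. \<forall>y\<in>cube m2. g x y \<in> {-1, 1}"
  shows "0 < max_abs_gadget_coeff g m1 m2"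
proof -
  have "0 \<le> max_abs_gadget_coeff g m1 m2"
    using abs_gadget_coeff_le_max[of "{}" m1 "{}" m2 g] by simp
  moreover have "max_abs_gadget_coeff g m1 m2 \<noteq> 0"
    using max_abs_gadget_coeff_lower_bound[OF pm] by auto
  ultimately show ?thesis by simp
qed

lemma inverse_max_abs_gadget_coeff_power_le:
  assumes pm: "\<forall>x\<in>cube m1. \<forall>y\<in>cube m2. g x y \<in> {-1, 1}"
  shows "inverse (max_abs_gadget_coeff g m1 m2) ^ k \<le> 2 powr (real ((m1 + m2) * k) / 2)"
proof -
  let ?M = "max_abs_gadget_coeff g m1 m2"
  have pos: "0 < ?M"
    by (rule max_abs_gadget_coeff_pos[OF pm])
  have "(inverse ?M)\<^sup>2 \<le> 2 ^ (m1 + m2)"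
    using max_abs_gadget_coeff_lower_bound[OF pm] pos by (simp add: power_inverse field_simps)
  then have "inverse ?M \<le> sqrt (2 ^ (m1 + m2))"
    using pos by (simp add: real_le_rsqrt)
  also have "\<dots> = 2 powr (real (m1 + m2) / 2)"
    by (simp add: powr_half_sqrt[symmetric] powr_realpow[symmetric] powr_powr)
  finally have "inverse ?M ^ k \<le> (2 powr (real (m1 + m2) / 2)) ^ k"
    using pos by (simp add: power_mono)
  also have "\<dots> = 2 powr (real ((m1 + m2) * k) / 2)"
    by (simp add: powr_realpow[symmetric] powr_powr)
  finally show ?thesis .
qed

theorem theorem7p5:
  fixes g :: "(nat \<Rightarrow> real) \<Rightarrow> (nat \<Rightarrow> real) \<Rightarrow> real"
    and m1 m2 k d n :: nat
  assumes gadget: "\<And>x y. x \<in> cube m1 \<Longrightarrow> y \<in> cube m2 \<Longrightarrow> g x y \<in> {-1, 1}"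
    and no_empty: "\<And>S T. S \<subseteq> {..<m1} \<Longrightarrow> T \<subseteq> {..<m2} \<Longrightarrow> S = {} \<or> T = {}
                     \<Longrightarrow> gadget_coeff g m1 m2 S T = 0"
  shows "L1k_comm XOR_gadget k d 1 1 n
           \<le> inverse (Max {\<bar>gadget_coeff g m1 m2 S T\<bar> | S T. S \<subseteq> {..<m1} \<and> T \<subseteq> {..<m2}}) ^ k
             * L1k_comm g k d m1 m2 n
       \<and> inverse (Max {\<bar>gadget_coeff g m1 m2 S T\<bar> | S T. S \<subseteq> {..<m1} \<and> T \<subseteq> {..<m2}}) ^ k
             * L1k_comm g k d m1 m2 n
           \<le> 2 powr (real ((m1 + m2) * k) / 2) * L1k_comm g k d m1 m2 n"
proof -
  have pm: "\<forall>x\<in>cube m1. \<forall>y\<in>cube m2. g x y \<in> {-1, 1}"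
    using gadget by blast
  obtain S T where S: "S \<subseteq> {..<m1}" and T: "T \<subseteq> {..<m2}"
    and max: "max_abs_gadget_coeff g m1 m2 = \<bar>gadget_coeff g m1 m2 S T\<bar>"
    by (rule max_abs_gadget_coeff_attained)
  have pos: "0 < max_abs_gadget_coeff g m1 m2"
    by (rule max_abs_gadget_coeff_pos[OF pm])
  with no_empty[OF S T] max have "S \<noteq> {}" "T \<noteq> {}" "gadget_coeff g m1 m2 S T \<noteq> 0"
    by auto
  with S T have "L1k_comm XOR_gadget k d 1 1 n
      \<le> inverse (max_abs_gadget_coeff g m1 m2) ^ k * L1k_comm g k d m1 m2 n"
    unfolding max by (intro L1k_comm_XOR_le[OF pm no_empty])
  moreover have "inverse (max_abs_gadget_coeff g m1 m2) ^ k * L1k_comm g k d m1 m2 n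
      \<le> 2 powr (real ((m1 + m2) * k) / 2) * L1k_comm g k d m1 m2 n"
    by (intro mult_right_mono inverse_max_abs_gadget_coeff_power_le[OF pm] L1k_comm_nonneg)
  ultimately show ?thesis
    unfolding max_abs_gadget_coeff_def by simp
qed

end
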